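(* Let $K$ be a compact Hausdorff space, $I$ a set, and $S:c_0(I)\to C(K)$ a linear isometric embedding. Let $\{\xi_i:i\in I\}\subseteq C(K)$ be the image under $S$ of the canonical unit vector basis of $c_0(I)$ and set $G=\bigcap_{i\in I}\xi_i^{-1}(0)$. Then the image of $S$ is complemented in $C(K|G)$.
   Context: $C(K)$ is the Banach space of real-valued continuous functions on $K$ with the supremum norm; for a closed $G\subseteq K$, $C(K|G)$ denotes the closed subspace of functions in $C(K)$ vanishing on $G$. *)

theory Defs
  imports "HOL-Analysis.Analysis"
begin

definition c0 :: "'i set \<Rightarrow> ('i \<Rightarrow> real) set" where
  "c0 I = {x. (\<forall>i. i \<notin> I \<longrightarrow> x i = 0) \<and>
              (\<forall>e>0. finite {i\<in>I. e \<le> \<bar>x i\<bar>})}"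

text \<open>Supremum norm on c_0(I) (entries outside I are 0, so the sup over UNIV is the
sup over I, and it is 0 when I is empty).\<close>
definition c0_norm :: "('i \<Rightarrow> real) \<Rightarrow> real" where
  "c0_norm x = (SUP i. \<bar>x i\<bar>)"

definition unit_vec :: "'i \<Rightarrow> 'i \<Rightarrow> real" where
  "unit_vec i = (\<lambda>j. if j = i then 1 else 0)"

text \<open>C(K|G): continuous functions on K vanishing on G (K compact, so C(K) = bcontfun).\<close>
definition CKG :: "'a::topological_space set \<Rightarrow> ('a, real) bcontfun set" where
  "CKG G = {f. \<forall>t\<in>G. apply_bcontfun f t = 0}"

definition complemented_in :: "('a::topological_space, real) bcontfun set \<Rightarrow> ('a, real) bcontfun set \<Rightarrow> bool" where
  "complemented_in Y Z \<longleftrightarrow> Y \<subseteq> Z \<and>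
     (\<exists>P. (\<forall>f\<in>Z. \<forall>g\<in>Z. P (f + g) = P f + P g) \<and>
          (\<forall>c. \<forall>f\<in>Z. P (c *\<^sub>R f) = c *\<^sub>R P f) \<and>
          (\<exists>B. \<forall>f\<in>Z. norm (P f) \<le> B * norm f) \<and>
          P ` Z \<subseteq> Y \<and> (\<forall>f\<in>Y. P f = f))"

end

theory Submission
  imports Defs
begin

text \<open>Write \<open>\<xi>\<^sub>i = S e\<^sub>i\<close>. Isometry gives \<open>\<parallel>\<xi>\<^sub>i\<parallel> = 1\<close> and \<open>|\<xi>\<^sub>i \<plusminus> \<xi>\<^sub>j| \<le> 1\<close> pointwise for
  \<open>i \<noteq> j\<close>, so at a point \<open>t\<^sub>i\<close> where \<open>|\<xi>\<^sub>i|\<close> attains the value 1 all other \<open>\<xi>\<^sub>j\<close> vanish.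
  Since finitely supported vectors are dense in \<open>c\<^sub>0(I)\<close>, evaluation of \<open>S x\<close> at \<open>t\<^sub>i\<close> returns
  \<open>x\<^sub>i \<xi>\<^sub>i(t\<^sub>i)\<close>, and \<open>S x\<close> vanishes on \<open>G\<close>. Hence \<open>f \<mapsto> S (\<xi>\<^sub>i(t\<^sub>i) f(t\<^sub>i))\<^sub>i\<close> is a norm-one
  projection of \<open>C(K|G)\<close> onto the image of \<open>S\<close>; the coefficient family lies in \<open>c\<^sub>0(I)\<close> because
  the compact set \<open>{|f| \<ge> \<epsilon>}\<close> misses \<open>G\<close>, so it is covered by finitely many of the open sets
  \<open>{\<xi>\<^sub>j \<noteq> 0}\<close>, and \<open>t\<^sub>i\<close> lies in \<open>{\<xi>\<^sub>j \<noteq> 0}\<close> only for \<open>j = i\<close>.\<close>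

lemma c0_finite_support:
  assumes "finite F" "F \<subseteq> I" "\<And>i. i \<notin> F \<Longrightarrow> x i = 0"
  shows "x \<in> c0 I"
  unfolding c0_def
proof (intro CollectI conjI allI impI)
  fix i assume "i \<notin> I" then show "x i = 0" using assms by auto
next
  fix e :: real assume "e > 0"
  then have "{i\<in>I. e \<le> \<bar>x i\<bar>} \<subseteq> F" using assms by force
  then show "finite {i\<in>I. e \<le> \<bar>x i\<bar>}" using assms(1) finite_subset by blast
qed

lemma unit_vec_in_c0: "i \<in> I \<Longrightarrow> unit_vec i \<in> c0 I"
  by (rule c0_finite_support[of "{i}"]) (auto simp: unit_vec_def)

lemma c0_vanishes_outside: "x \<in> c0 I \<Longrightarrow> i \<notin> I \<Longrightarrow> x i = 0"
  by (simp add: c0_def)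

lemma finite_c0_level_set: "x \<in> c0 I \<Longrightarrow> e > 0 \<Longrightarrow> finite {i\<in>I. e \<le> \<bar>x i\<bar>}"
  by (simp add: c0_def)

lemma c0_add:
  assumes "x \<in> c0 I" "y \<in> c0 I"
  shows "(\<lambda>i. x i + y i) \<in> c0 I"
  unfolding c0_def
proof (intro CollectI conjI allI impI)
  fix i assume "i \<notin> I" then show "x i + y i = 0" using assms by (simp add: c0_vanishes_outside)
next
  fix e :: real assume "e > 0"
  have "{i\<in>I. e \<le> \<bar>x i + y i\<bar>} \<subseteq> {i\<in>I. e/2 \<le> \<bar>x i\<bar>} \<union> {i\<in>I. e/2 \<le> \<bar>y i\<bar>}"
    by auto
  moreover have "finite ({i\<in>I. e/2 \<le> \<bar>x i\<bar>} \<union> {i\<in>I. e/2 \<le> \<bar>y i\<bar>})"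
    using finite_c0_level_set[OF assms(1), of "e/2"] finite_c0_level_set[OF assms(2), of "e/2"]
      \<open>e > 0\<close> by simp
  ultimately show "finite {i\<in>I. e \<le> \<bar>x i + y i\<bar>}" by (rule finite_subset)
qed

lemma c0_scale:
  assumes "x \<in> c0 I"
  shows "(\<lambda>i. c * x i) \<in> c0 I"
proof (cases "c = 0")
  case True then show ?thesis by (intro c0_finite_support[of "{}"]) auto
next
  case False
  show ?thesis unfolding c0_def
  proof (intro CollectI conjI allI impI)
    fix i assume "i \<notin> I" then show "c * x i = 0" using assms by (simp add: c0_vanishes_outside)
  next
    fix e :: real assume "e > 0"
    have "{i\<in>I. e \<le> \<bar>c * x i\<bar>} = {i\<in>I. e / \<bar>c\<bar> \<le> \<bar>x i\<bar>}"
      using False by (auto simp: abs_mult field_simps)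
    then show "finite {i\<in>I. e \<le> \<bar>c * x i\<bar>}"
      using assms \<open>e > 0\<close> False by (simp add: finite_c0_level_set)
  qed
qed

lemma c0_norm_le: "(\<And>i. \<bar>x i\<bar> \<le> e) \<Longrightarrow> c0_norm x \<le> e"
  unfolding c0_norm_def by (rule cSUP_least) auto

lemma abs_le_c0_norm:
  assumes "x \<in> c0 I"
  shows "\<bar>x i\<bar> \<le> c0_norm x"
proof -
  have range: "range (\<lambda>i. \<bar>x i\<bar>) \<subseteq> (\<lambda>i. \<bar>x i\<bar>) ` {i\<in>I. 1 \<le> \<bar>x i\<bar>} \<union> {..1}"
  proof clarify
    fix i assume "\<bar>x i\<bar> \<notin> (\<lambda>i. \<bar>x i\<bar>) ` {i\<in>I. 1 \<le> \<bar>x i\<bar>}"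
    then show "\<bar>x i\<bar> \<le> 1" using assms by (cases "i \<in> I") (auto simp: c0_vanishes_outside)
  qed
  have "bdd_above ((\<lambda>i. \<bar>x i\<bar>) ` {i\<in>I. 1 \<le> \<bar>x i\<bar>} \<union> {..1})"
    using assms by (simp add: finite_c0_level_set bdd_above_finite)
  then have "bdd_above (range (\<lambda>i. \<bar>x i\<bar>))" using range by (rule bdd_above_mono)
  then show ?thesis unfolding c0_norm_def by (rule cSUP_upper[OF UNIV_I])
qed

lemma c0_norm_unit_vec: "i \<in> I \<Longrightarrow> c0_norm (unit_vec i) = 1"
  using abs_le_c0_norm[OF unit_vec_in_c0, of i I i]
  by (intro antisym c0_norm_le) (auto simp: unit_vec_def)

lemma c0_finite_support_approx:
  assumes x: "x \<in> c0 I" and e: "e > 0"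
  obtains F y z where "finite F" "F \<subseteq> I" "\<And>i. i \<notin> F \<Longrightarrow> y i = 0"
    "z \<in> c0 I" "c0_norm z \<le> e" "x = (\<lambda>i. y i + z i)"
proof
  define F where "F = {i\<in>I. e \<le> \<bar>x i\<bar>}"
  show "finite F" using x e by (simp add: F_def finite_c0_level_set)
  show "F \<subseteq> I" by (auto simp: F_def)
  define y where "y i = (if i \<in> F then x i else 0)" for i
  show "y i = 0" if "i \<notin> F" for i using that by (simp add: y_def)
  then have "y \<in> c0 I" by (rule c0_finite_support[OF \<open>finite F\<close> \<open>F \<subseteq> I\<close>])
  define z where "z i = x i + (-1) * y i" for i
  show "z \<in> c0 I" unfolding z_def by (rule c0_add[OF x c0_scale[OF \<open>y \<in> c0 I\<close>]])
  show "c0_norm z \<le> e"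
  proof (rule c0_norm_le)
    fix i
    show "\<bar>z i\<bar> \<le> e"
      using e x by (cases "i \<in> I") (auto simp: z_def y_def F_def c0_vanishes_outside)
  qed
  show "x = (\<lambda>i. y i + z i)" by (simp add: z_def)
qed

lemma c0_functional_finite_support_eq_zero:
  assumes add: "\<And>x y. x \<in> c0 I \<Longrightarrow> y \<in> c0 I \<Longrightarrow> \<phi> (\<lambda>i. x i + y i) = \<phi> x + \<phi> y"
    and scale: "\<And>c x. x \<in> c0 I \<Longrightarrow> \<phi> (\<lambda>i. c * x i) = c * \<phi> x"
    and unit: "\<And>j. j \<in> I \<Longrightarrow> \<phi> (unit_vec j) = 0"
  shows "finite F \<Longrightarrow> F \<subseteq> I \<Longrightarrow> (\<And>i. i \<notin> F \<Longrightarrow> x i = 0) \<Longrightarrow> \<phi> x = 0"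
proof (induction F arbitrary: x rule: finite_induct)
  case empty
  have "(\<lambda>i. 0) \<in> c0 I" by (rule c0_finite_support[of "{}"]) auto
  moreover have "x = (\<lambda>i. 0 * 0)" using empty by auto
  ultimately show ?case using scale[of "\<lambda>i. 0" 0] by simp
next
  case (insert a F)
  define x' where "x' = x(a := 0)"
  have x': "x' \<in> c0 I" using insert by (intro c0_finite_support[of F]) (auto simp: x'_def)
  have a: "unit_vec a \<in> c0 I" using insert by (intro unit_vec_in_c0) auto
  have "x = (\<lambda>i. x' i + x a * unit_vec a i)" by (auto simp: x'_def unit_vec_def)
  then have "\<phi> x = \<phi> x' + x a * \<phi> (unit_vec a)"
    using add[OF x' c0_scale[OF a]] scale[OF a] by metis
  moreover have "\<phi> x' = 0" using insert by (intro insert.IH) (auto simp: x'_def)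
  ultimately show ?case using unit insert by simp
qed

lemma c0_functional_eq_zero:
  assumes add: "\<And>x y. x \<in> c0 I \<Longrightarrow> y \<in> c0 I \<Longrightarrow> \<phi> (\<lambda>i. x i + y i) = \<phi> x + \<phi> y"
    and scale: "\<And>c x. x \<in> c0 I \<Longrightarrow> \<phi> (\<lambda>i. c * x i) = c * \<phi> x"
    and bound: "\<And>x. x \<in> c0 I \<Longrightarrow> \<bar>\<phi> x\<bar> \<le> B * c0_norm x"
    and unit: "\<And>j. j \<in> I \<Longrightarrow> \<phi> (unit_vec j) = 0"
    and x: "x \<in> c0 I"
  shows "\<phi> x = 0"
proof -
  have small: "\<bar>\<phi> x\<bar> \<le> \<bar>B\<bar> * e" if "e > 0" for e
  proof -
    obtain F y z where F: "finite F" "F \<subseteq> I" "\<And>i. i \<notin> F \<Longrightarrow> y i = 0"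
      and z: "z \<in> c0 I" "c0_norm z \<le> e" and xyz: "x = (\<lambda>i. y i + z i)"
      using c0_finite_support_approx[OF x \<open>e > 0\<close>] by blast
    have y: "y \<in> c0 I" using F by (rule c0_finite_support)
    have "\<phi> y = 0" using c0_functional_finite_support_eq_zero[OF add scale unit F] .
    then have "\<phi> x = \<phi> z" using add[OF y z(1)] xyz by simp
    also have "\<bar>\<phi> z\<bar> \<le> \<bar>B\<bar> * c0_norm z"
    proof -
      have "0 \<le> c0_norm z" using abs_le_c0_norm[OF z(1)] abs_ge_zero order_trans by blast
      then have "B * c0_norm z \<le> \<bar>B\<bar> * c0_norm z" by (simp add: mult_right_mono)
      then show ?thesis using bound[OF z(1)] by linarith
    qed
    also have "\<dots> \<le> \<bar>B\<bar> * e" using z(2) by (simp add: mult_left_mono)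
    finally show ?thesis .
  qed
  have "\<bar>\<phi> x\<bar> \<le> 0 + e" if "e > 0" for e
  proof (cases "B = 0")
    case True then show ?thesis using small[of 1] that by simp
  next
    case False then show ?thesis using small[of "e / \<bar>B\<bar>"] that by simp
  qed
  then show ?thesis using field_le_epsilon[of "\<bar>\<phi> x\<bar>" 0] by simp
qed

locale c0_isometric_embedding =
  fixes I :: "'i set" and S :: "('i \<Rightarrow> real) \<Rightarrow> ('a::topological_space, real) bcontfun"
  assumes S_add: "\<And>x y. x \<in> c0 I \<Longrightarrow> y \<in> c0 I \<Longrightarrow> S (\<lambda>i. x i + y i) = S x + S y"
    and S_scale: "\<And>c x. x \<in> c0 I \<Longrightarrow> S (\<lambda>i. c * x i) = c *\<^sub>R S x"
    and S_isom: "\<And>x. x \<in> c0 I \<Longrightarrow> norm (S x) = c0_norm x"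
begin

abbreviation \<xi> :: "'i \<Rightarrow> 'a \<Rightarrow> real" where
  "\<xi> i \<equiv> apply_bcontfun (S (unit_vec i))"

lemma eval_add:
  "x \<in> c0 I \<Longrightarrow> y \<in> c0 I \<Longrightarrow>
    apply_bcontfun (S (\<lambda>i. x i + y i)) t = apply_bcontfun (S x) t + apply_bcontfun (S y) t"
  by (simp add: S_add)

lemma eval_scale: "x \<in> c0 I \<Longrightarrow> apply_bcontfun (S (\<lambda>i. c * x i)) t = c * apply_bcontfun (S x) t"
  by (simp add: S_scale)

lemma abs_eval_le: "x \<in> c0 I \<Longrightarrow> \<bar>apply_bcontfun (S x) t\<bar> \<le> c0_norm x"
  using norm_bounded[of "S x" t] by (simp add: S_isom)

lemma eval_eq_zero_if_basis_vanishes: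
  assumes "x \<in> c0 I" "\<And>j. j \<in> I \<Longrightarrow> \<xi> j t = 0"
  shows "apply_bcontfun (S x) t = 0"
  by (rule c0_functional_eq_zero[where \<phi> = "\<lambda>x. apply_bcontfun (S x) t" and B = 1])
    (use assms in \<open>simp_all add: eval_add eval_scale abs_eval_le\<close>)

lemma abs_basis_add_le:
  assumes "i \<in> I" "j \<in> I" "i \<noteq> j" "\<bar>s\<bar> = 1"
  shows "\<bar>\<xi> i t + s * \<xi> j t\<bar> \<le> 1"
proof -
  have i: "unit_vec i \<in> c0 I" and j: "unit_vec j \<in> c0 I"
    using assms by (auto intro: unit_vec_in_c0)
  define w where "w k = unit_vec i k + s * unit_vec j k" for k
  have w: "w \<in> c0 I" unfolding w_def by (rule c0_add[OF i c0_scale[OF j]])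
  have "c0_norm w \<le> 1" using assms by (intro c0_norm_le) (simp add: w_def unit_vec_def)
  moreover have "apply_bcontfun (S w) t = \<xi> i t + s * \<xi> j t"
    unfolding w_def by (simp add: eval_add[OF i c0_scale[OF j]] eval_scale[OF j])
  ultimately show ?thesis using abs_eval_le[OF w, of t] by simp
qed

lemma basis_peak_exists:
  assumes "compact (UNIV :: 'a set)" "i \<in> I"
  shows "\<exists>t. \<bar>\<xi> i t\<bar> = 1"
proof -
  have "continuous_on UNIV (\<lambda>t. \<bar>\<xi> i t\<bar>)"
    by (intro continuous_on_rabs continuous_on_apply_bcontfun)
  then obtain t where t: "\<And>s. \<bar>\<xi> i s\<bar> \<le> \<bar>\<xi> i t\<bar>"
    using continuous_attains_sup[OF assms(1)] by blast
  have "1 = norm (S (unit_vec i))" using assms(2) by (simp add: S_isom unit_vec_in_c0 c0_norm_unit_vec)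
  also have "\<dots> \<le> \<bar>\<xi> i t\<bar>" using t by (intro norm_bound) simp
  finally have "1 \<le> \<bar>\<xi> i t\<bar>" .
  moreover have "\<bar>\<xi> i t\<bar> \<le> 1"
    using abs_eval_le[OF unit_vec_in_c0[OF assms(2)]] assms(2) by (simp add: c0_norm_unit_vec)
  ultimately show ?thesis by (intro exI[of _ t]) simp
qed

text \<open>Adding and subtracting \<open>\<xi>\<^sub>j(t)\<close> both keep \<open>|\<xi>\<^sub>i(t) \<plusminus> \<xi>\<^sub>j(t)| \<le> 1\<close>, which forces
  \<open>\<xi>\<^sub>j(t) = 0\<close> once \<open>|\<xi>\<^sub>i(t)| = 1\<close>.\<close>
lemma basis_vanishes_at_peak:
  assumes "i \<in> I" "j \<in> I" "i \<noteq> j" "\<bar>\<xi> i t\<bar> = 1"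
  shows "\<xi> j t = 0"
  using abs_basis_add_le[OF assms(1-3), of 1 t] abs_basis_add_le[OF assms(1-3), of "-1" t] assms(4)
  by arith

lemma eval_at_peak:
  assumes x: "x \<in> c0 I" and i: "i \<in> I" and peak: "\<bar>\<xi> i t\<bar> = 1"
  shows "apply_bcontfun (S x) t = x i * \<xi> i t"
proof -
  have "apply_bcontfun (S x) t - x i * \<xi> i t = 0"
  proof (rule c0_functional_eq_zero[where \<phi> = "\<lambda>x. apply_bcontfun (S x) t - x i * \<xi> i t" and B = 2])
    show "\<bar>apply_bcontfun (S y) t - y i * \<xi> i t\<bar> \<le> 2 * c0_norm y" if "y \<in> c0 I" for y
    proof -
      have "\<bar>y i * \<xi> i t\<bar> \<le> c0_norm y" using abs_le_c0_norm[OF that, of i] peak by (simp add: abs_mult)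
      then show ?thesis using abs_eval_le[OF that, of t] by linarith
    qed
    show "apply_bcontfun (S (unit_vec j)) t - unit_vec j i * \<xi> i t = 0" if "j \<in> I" for j
      using basis_vanishes_at_peak[OF i that _ peak] by (cases "j = i") (auto simp: unit_vec_def)
  qed (simp_all add: eval_add eval_scale x algebra_simps)
  then show ?thesis by simp
qed

lemma complemented_in_if_bounded_left_inverse:
  assumes image: "S ` c0 I \<subseteq> Z"
    and R_c0: "\<And>f. f \<in> Z \<Longrightarrow> R f \<in> c0 I"
    and R_add: "\<And>f g. f \<in> Z \<Longrightarrow> g \<in> Z \<Longrightarrow> R (f + g) = (\<lambda>i. R f i + R g i)"
    and R_scale: "\<And>c f. f \<in> Z \<Longrightarrow> R (c *\<^sub>R f) = (\<lambda>i. c * R f i)"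
    and R_bound: "\<And>f. f \<in> Z \<Longrightarrow> c0_norm (R f) \<le> B * norm f"
    and R_S: "\<And>x. x \<in> c0 I \<Longrightarrow> R (S x) = x"
  shows "complemented_in (S ` c0 I) Z"
  unfolding complemented_in_def
proof (intro conjI exI[of _ "S \<circ> R"] exI[of _ B])
  show "\<forall>f\<in>Z. \<forall>g\<in>Z. (S \<circ> R) (f + g) = (S \<circ> R) f + (S \<circ> R) g"
    by (simp add: R_add R_c0 S_add)
  show "\<forall>c. \<forall>f\<in>Z. (S \<circ> R) (c *\<^sub>R f) = c *\<^sub>R (S \<circ> R) f"
    by (simp add: R_scale R_c0 S_scale)
  show "\<forall>f\<in>Z. norm ((S \<circ> R) f) \<le> B * norm f"
    by (simp add: R_bound R_c0 S_isom)
  show "(S \<circ> R) ` Z \<subseteq> S ` c0 I" using R_c0 by auto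
  show "\<forall>f\<in>S ` c0 I. (S \<circ> R) f = f" by (auto simp: R_S)
qed (fact image)

definition peak_coeffs :: "('i \<Rightarrow> 'a) \<Rightarrow> ('a, real) bcontfun \<Rightarrow> 'i \<Rightarrow> real" where
  "peak_coeffs T f i = (if i \<in> I then apply_bcontfun f (T i) * \<xi> i (T i) else 0)"

context
  fixes T :: "'i \<Rightarrow> 'a"
  assumes peak: "\<And>i. i \<in> I \<Longrightarrow> \<bar>\<xi> i (T i)\<bar> = 1"
begin

lemma abs_peak_coeffs: "i \<in> I \<Longrightarrow> \<bar>peak_coeffs T f i\<bar> = \<bar>apply_bcontfun f (T i)\<bar>"
  by (simp add: peak_coeffs_def abs_mult peak)

lemma peak_coeffs_add: "peak_coeffs T (f + g) = (\<lambda>i. peak_coeffs T f i + peak_coeffs T g i)"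
  by (auto simp: peak_coeffs_def distrib_right)

lemma peak_coeffs_scale: "peak_coeffs T (c *\<^sub>R f) = (\<lambda>i. c * peak_coeffs T f i)"
  by (auto simp: peak_coeffs_def)

lemma c0_norm_peak_coeffs_le: "c0_norm (peak_coeffs T f) \<le> norm f"
proof (rule c0_norm_le)
  fix i
  show "\<bar>peak_coeffs T f i\<bar> \<le> norm f"
    using norm_bounded[of f "T i"]
    by (cases "i \<in> I") (simp add: abs_peak_coeffs, simp add: peak_coeffs_def)
qed

lemma peak_coeffs_S:
  assumes "x \<in> c0 I"
  shows "peak_coeffs T (S x) = x"
proof
  fix i
  show "peak_coeffs T (S x) i = x i"
  proof (cases "i \<in> I")
    case True
    have "\<xi> i (T i) * \<xi> i (T i) = 1" using peak[OF True] abs_mult_self_eq[of "\<xi> i (T i)"] by simp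
    then show ?thesis using eval_at_peak[OF assms True peak[OF True]] True
      by (simp add: peak_coeffs_def mult.assoc)
  qed (use assms in \<open>simp add: peak_coeffs_def c0_vanishes_outside\<close>)
qed

lemma finite_peak_level_set:
  assumes K: "compact (UNIV :: 'a set)" and f: "f \<in> CKG (\<Inter>i\<in>I. {t. \<xi> i t = 0})" and "e > 0"
  shows "finite {i\<in>I. e \<le> \<bar>apply_bcontfun f (T i)\<bar>}"
proof -
  define C where "C = {t. e \<le> \<bar>apply_bcontfun f t\<bar>}"
  have "closed C" unfolding C_def
    by (intro closed_Collect_le continuous_on_rabs continuous_on_apply_bcontfun continuous_on_const)
  then have "compact C" using compact_Int_closed[OF K] by simp
  moreover have "open {t. \<xi> j t \<noteq> 0}" for j
    by (intro open_Collect_neq continuous_on_apply_bcontfun continuous_on_const)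
  moreover have "C \<subseteq> (\<Union>j\<in>I. {t. \<xi> j t \<noteq> 0})"
    using f \<open>e > 0\<close> by (force simp: C_def CKG_def)
  ultimately obtain F where F: "F \<subseteq> I" "finite F" "C \<subseteq> (\<Union>j\<in>F. {t. \<xi> j t \<noteq> 0})"
    by (rule compactE_image)
  have "{i\<in>I. e \<le> \<bar>apply_bcontfun f (T i)\<bar>} \<subseteq> F"
  proof clarify
    fix i assume i: "i \<in> I" and "e \<le> \<bar>apply_bcontfun f (T i)\<bar>"
    then obtain j where "j \<in> F" "\<xi> j (T i) \<noteq> 0" using F(3) by (auto simp: C_def)
    then show "i \<in> F" using basis_vanishes_at_peak[OF i _ _ peak[OF i]] F(1) by blast
  qed
  then show ?thesis using F(2) finite_subset by blast
qed

lemma peak_coeffs_in_c0: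
  assumes "compact (UNIV :: 'a set)" and "f \<in> CKG (\<Inter>i\<in>I. {t. \<xi> i t = 0})"
  shows "peak_coeffs T f \<in> c0 I"
  unfolding c0_def
proof (intro CollectI conjI allI impI)
  show "peak_coeffs T f i = 0" if "i \<notin> I" for i using that by (simp add: peak_coeffs_def)
  show "finite {i\<in>I. e \<le> \<bar>peak_coeffs T f i\<bar>}" if "e > 0" for e
    using finite_peak_level_set[OF assms that] by (simp add: abs_peak_coeffs cong: conj_cong)
qed

end

end

theorem lemma2p3:
  fixes S :: "('i \<Rightarrow> real) \<Rightarrow> ('a::t2_space, real) bcontfun"
    and I :: "'i set"
  assumes K_compact: "compact (UNIV :: 'a set)"
    and S_add: "\<And>x y. x \<in> c0 I \<Longrightarrow> y \<in> c0 I \<Longrightarrow> S (\<lambda>i. x i + y i) = S x + S y"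
    and S_scale: "\<And>c x. x \<in> c0 I \<Longrightarrow> S (\<lambda>i. c * x i) = c *\<^sub>R S x"
    and S_isom: "\<And>x. x \<in> c0 I \<Longrightarrow> norm (S x) = c0_norm x"
  defines "G \<equiv> (\<Inter>i\<in>I. {t. apply_bcontfun (S (unit_vec i)) t = 0})"
  shows "complemented_in (S ` c0 I) (CKG G)"
proof -
  interpret c0_isometric_embedding I S
    using S_add S_scale S_isom by unfold_locales
  obtain T where peak: "\<And>i. i \<in> I \<Longrightarrow> \<bar>\<xi> i (T i)\<bar> = 1"
    using basis_peak_exists[OF K_compact] by metis
  show ?thesis
  proof (rule complemented_in_if_bounded_left_inverse[where R = "peak_coeffs T" and B = 1])
    show "S ` c0 I \<subseteq> CKG G"
      using eval_eq_zero_if_basis_vanishes by (auto simp: CKG_def G_def)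
  qed (use peak K_compact in \<open>simp_all add: G_def peak_coeffs_in_c0 peak_coeffs_add
    peak_coeffs_scale c0_norm_peak_coeffs_le peak_coeffs_S\<close>)
qed

end
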